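(* Let $\mathbf{u}=(u_1,\dots,u_n)$ be a utility profile over $C$, $|C|=m$, and let $R\in\{R^C,R^V\}$. The game $G=(\mathcal{L},R,\mathbf{u})$ admits a PNE if and only if one of the following conditions holds: (1) all voters rank some candidate $c_j$ first; (2) each candidate is ranked first by at most one voter, and moreover $\frac{1}{n}\sum_{i\in N}u_\ell(a_i)\ge\max_{i\in N\setminus\{\ell\}}u_\ell(a_i)$ for each $\ell\in N$; (3) there exists a set of candidates $X=\{c_{\ell_1},\dots,c_{\ell_k}\}$ with $2\le k\le\min(n/2,m)$ and a partition of the voters into $k$ groups $N_1,\dots,N_k$ of size $n/k$ each such that for each $j\in[k]$ and each $i\in N_j$ we have $c_{\ell_j}\succ_i c$ for all $c\in X\setminus\{c_{\ell_j}\}$, and moreover $\frac{1}{k}\sum_{c\in X}u_i(c)\ge\max_{c\in X\setminus\{c_{\ell_j}\}}u_i(c)$. Further, if condition (1) holds for some $c_j\in C$, then if $R=R^C$, for each $i\in N$ the game $G$ has a PNE where $i$ votes for $c_j$ and all other voters abstain, whereas if $R=R^V$ the game $G$ has a PNE where all voters abstain; if condition (2) holds, then $G$ has a PNE where each voter votes for her top candidate; and if condition (3) holds for some set $X$, then $G$ has a PNE where each voter votes for her favorite candidate in $X$. The game $G$ has no other PNE.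
   Context: Let $C=\{c_1,\dots,c_m\}$ be a set of candidates and $N=\{1,\dots,n\}$ a set of voters; $[k]=\{1,\dots,k\}$. Each voter $i$ has an injective utility function $u_i:C\to\mathbb{N}$; $\mathbf{u}=(u_1,\dots,u_n)$. Voter $i$'s preference $\succ_i$ is $c\succ_i c'$ iff $u_i(c)>u_i(c')$; $a_i$ is $i$'s top candidate. A ballot vector is $\mathbf{b}=(b_1,\dots,b_n)$ with $b_i\in C\cup\{\bot\}$ ($\bot$ = abstain). $(\mathbf{b}_{-i},b')$ denotes $\mathbf{b}$ with $b_i$ replaced by $b'$. $\mathrm{sc}(c,\mathbf{b})=|\{i:b_i=c\}|$, $M(\mathbf{b})=\max_c\mathrm{sc}(c,\mathbf{b})$, $W(\mathbf{b})=\{c:\mathrm{sc}(c,\mathbf{b})=M(\mathbf{b})\}$ (equal to $C$ if all abstain). If $|W(\mathbf{b})|=1$ its element wins; otherwise: under $R^C$ the winner is chosen uniformly at random from $W(\mathbf{b})$; under $R^V$ a voter $i\in N$ is chosen uniformly at random, and the winner is $b_i$ if $b_i\in W(\mathbf{b})$ and otherwise $i$'s most preferred candidate in $W(\mathbf{b})$. Let $p^X_j(\mathbf{b})$ denote the probability that $c_j$ wins under $R^X$. Fix $0<\varepsilon<\min\{1/m,1/n\}$. In the lazy setting $\mathcal{L}$, voter $i$'s utility is $U_i(\mathbf{b})=\sum_j p^X_j(\mathbf{b})u_i(c_j)$ if $b_i\in C$ and $\sum_j p^X_j(\mathbf{b})u_i(c_j)+\varepsilon$ if $b_i=\bot$.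 The game $(\mathcal{L},R,\mathbf{u})$ has players $N$, action sets $C\cup\{\bot\}$. A PNE is a ballot vector $\mathbf{b}$ with $U_i(\mathbf{b})\ge U_i(\mathbf{b}_{-i},b')$ for all $i\in N$ and all $b'\in C\cup\{\bot\}$. *)

theory Defs
  imports Complex_Main
begin

text \<open>Voting rules: R^C (random candidate tie-breaking) and R^V (random voter tie-breaking).\<close>
datatype rule = RC | RV

text \<open>Ballots: None = abstain (bottom), Some c = vote for c.\<close>

definition sc :: "'v set \<Rightarrow> ('v \<Rightarrow> 'c option) \<Rightarrow> 'c \<Rightarrow> nat" where
  "sc N b c = card {i \<in> N. b i = Some c}"

definition Wset :: "'v set \<Rightarrow> 'c set \<Rightarrow> ('v \<Rightarrow> 'c option) \<Rightarrow> 'c set" where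
  "Wset N C b = {c \<in> C. sc N b c = Max (sc N b ` C)}"

text \<open>Voter i's most preferred candidate in S (well defined for injective utilities).\<close>
definition fav :: "('v \<Rightarrow> 'c \<Rightarrow> nat) \<Rightarrow> 'v \<Rightarrow> 'c set \<Rightarrow> 'c" where
  "fav u i S = (THE c. c \<in> S \<and> (\<forall>d\<in>S. d \<noteq> c \<longrightarrow> u i d < u i c))"

text \<open>Outcome under R^V when voter i is drawn.\<close>
definition vpick :: "('v \<Rightarrow> 'c \<Rightarrow> nat) \<Rightarrow> 'v set \<Rightarrow> 'c set \<Rightarrow> ('v \<Rightarrow> 'c option) \<Rightarrow> 'v \<Rightarrow> 'c" where
  "vpick u N C b i = (case b i of
      Some d \<Rightarrow> (if d \<in> Wset N C b then d else fav u i (Wset N C b))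
    | None \<Rightarrow> fav u i (Wset N C b))"

definition winprob :: "rule \<Rightarrow> ('v \<Rightarrow> 'c \<Rightarrow> nat) \<Rightarrow> 'v set \<Rightarrow> 'c set \<Rightarrow> ('v \<Rightarrow> 'c option) \<Rightarrow> 'c \<Rightarrow> real" where
  "winprob R u N C b c =
    (if card (Wset N C b) = 1 then (if c \<in> Wset N C b then 1 else 0)
     else (case R of
       RC \<Rightarrow> (if c \<in> Wset N C b then 1 / real (card (Wset N C b)) else 0)
     | RV \<Rightarrow> real (card {i \<in> N. vpick u N C b i = c}) / real (card N)))"

definition lazy_util :: "rule \<Rightarrow> ('v \<Rightarrow> 'c \<Rightarrow> nat) \<Rightarrow> 'v set \<Rightarrow> 'c set \<Rightarrow> real \<Rightarrow> ('v \<Rightarrow> 'c option) \<Rightarrow> 'v \<Rightarrow> real" where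
  "lazy_util R u N C \<epsilon> b i =
    (\<Sum>c\<in>C. winprob R u N C b c * real (u i c)) + (if b i = None then \<epsilon> else 0)"

definition ballots :: "'v set \<Rightarrow> 'c set \<Rightarrow> ('v \<Rightarrow> 'c option) set" where
  "ballots N C = {b. (\<forall>i\<in>N. b i \<in> insert None (Some ` C)) \<and> (\<forall>i. i \<notin> N \<longrightarrow> b i = None)}"

definition is_PNE :: "rule \<Rightarrow> ('v \<Rightarrow> 'c \<Rightarrow> nat) \<Rightarrow> 'v set \<Rightarrow> 'c set \<Rightarrow> real \<Rightarrow> ('v \<Rightarrow> 'c option) \<Rightarrow> bool" where
  "is_PNE R u N C \<epsilon> b \<longleftrightarrow> b \<in> ballots N C \<and>
     (\<forall>i\<in>N. \<forall>x\<in>insert None (Some ` C).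
        lazy_util R u N C \<epsilon> (b(i := x)) i \<le> lazy_util R u N C \<epsilon> b i)"

definition cond1 :: "('v \<Rightarrow> 'c \<Rightarrow> nat) \<Rightarrow> 'v set \<Rightarrow> 'c set \<Rightarrow> 'c \<Rightarrow> bool" where
  "cond1 u N C c \<longleftrightarrow> c \<in> C \<and> (\<forall>i\<in>N. fav u i C = c)"

definition cond2 :: "('v \<Rightarrow> 'c \<Rightarrow> nat) \<Rightarrow> 'v set \<Rightarrow> 'c set \<Rightarrow> bool" where
  "cond2 u N C \<longleftrightarrow> inj_on (\<lambda>i. fav u i C) N \<and>
     (\<forall>l\<in>N. real (\<Sum>i\<in>N. u l (fav u i C)) / real (card N)
              \<ge> real (Max ((\<lambda>i. u l (fav u i C)) ` (N - {l}))))"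

text \<open>Condition (3) for the candidate set X; the partition N_1..N_k is given by g : N \<rightarrow> X
  (N_j = voters mapped to c_{l_j}).\<close>
definition cond3 :: "('v \<Rightarrow> 'c \<Rightarrow> nat) \<Rightarrow> 'v set \<Rightarrow> 'c set \<Rightarrow> 'c set \<Rightarrow> bool" where
  "cond3 u N C X \<longleftrightarrow> X \<subseteq> C \<and> 2 \<le> card X \<and> 2 * card X \<le> card N \<and> card X \<le> card C \<and>
     (\<exists>g. (\<forall>i\<in>N. g i \<in> X) \<and>
          (\<forall>c\<in>X. card {i \<in> N. g i = c} * card X = card N) \<and>
          (\<forall>i\<in>N. \<forall>c\<in>X - {g i}. u i c < u i (g i)) \<and>
          (\<forall>i\<in>N. real (\<Sum>c\<in>X. u i c) / real (card X) \<ge> real (Max (u i ` (X - {g i})))))"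

end

theory Submission
  imports Defs
begin

text \<open>
  The abstention bonus \<epsilon> is below 1/m and 1/n, so it never outweighs a deviation that
  makes a strictly better candidate win more often, but it rules out wasted votes. With no
  votes, a voter can make her favourite the unique winner; this only fails to pay under R^V
  when all voters share that favourite. A unique winner is kept by a single voter (any other
  vote could be withdrawn), and it must be everybody's favourite, as otherwise a second voter
  profits from a two-way tie; this forces R^C. In a tie among W every voter votes for her
  favourite in W, so each winner gets the same number M of votes; switching to another winner
  makes it the unique winner, which must not beat the voter's average over W, and for M = 1
  bringing a non-winner into the tie must not pay either, so she votes for her overall
  favourite. These are conditions (2) (M = 1) and (3) (M \<ge> 2); conversely, in such a profile
  every deviation either creates one of these outcomes or lowers the deviator's average.
\<close>

section \<open>Scores and winning sets\<close>

lemma fav_eqI: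
  assumes "c \<in> S" "\<And>d. d \<in> S \<Longrightarrow> d \<noteq> c \<Longrightarrow> u i d < u i c"
  shows "fav u i S = c"
  unfolding fav_def
proof (rule the_equality)
  show "c \<in> S \<and> (\<forall>d\<in>S. d \<noteq> c \<longrightarrow> u i d < u i c)" using assms by blast
next
  fix x assume x: "x \<in> S \<and> (\<forall>d\<in>S. d \<noteq> x \<longrightarrow> u i d < u i x)"
  show "x = c"
  proof (rule ccontr)
    assume "x \<noteq> c"
    then have "u i c < u i x" "u i x < u i c" using x assms by auto
    then show False by simp
  qed
qed

lemma fav_greatest:
  assumes "finite S" "S \<noteq> {}" "inj_on (u i) S"
  shows "fav u i S \<in> S" and "\<And>d. d \<in> S \<Longrightarrow> d \<noteq> fav u i S \<Longrightarrow> u i d < u i (fav u i S)"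
proof -
  have "Max (u i ` S) \<in> u i ` S" using assms(1,2) by simp
  then obtain c where c: "c \<in> S" "u i c = Max (u i ` S)" by auto
  have greater: "u i d < u i c" if "d \<in> S" "d \<noteq> c" for d
  proof -
    have "u i d \<le> u i c" using c that assms(1) by simp
    moreover have "u i d \<noteq> u i c" using inj_onD[OF assms(3)] c(1) that by blast
    ultimately show ?thesis by simp
  qed
  have "fav u i S = c" by (rule fav_eqI[where u = u and i = i, OF c(1) greater])
  then show "fav u i S \<in> S" "\<And>d. d \<in> S \<Longrightarrow> d \<noteq> fav u i S \<Longrightarrow> u i d < u i (fav u i S)"
    using c(1) greater by auto
qed

lemma sc_fun_upd:
  assumes "finite N" "i \<in> N"
  shows "sc N (b(i := x)) c + (if b i = Some c then 1 else 0) = sc N b c + (if x = Some c then 1 else 0)"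
proof -
  let ?R = "{j \<in> N - {i}. b j = Some c}"
  have "{j \<in> N. (b(i := x)) j = Some c} = (if x = Some c then insert i ?R else ?R)"
       "{j \<in> N. b j = Some c} = (if b i = Some c then insert i ?R else ?R)"
    using assms(2) by auto
  moreover have "finite ?R" "i \<notin> ?R" using assms(1) by auto
  ultimately show ?thesis unfolding sc_def by auto
qed

lemma sc_pos_iff: "finite N \<Longrightarrow> 0 < sc N b c \<longleftrightarrow> (\<exists>i\<in>N. b i = Some c)"
  unfolding sc_def by (auto simp: card_gt_0_iff)

lemma sc_sole_vote: "i \<in> N \<Longrightarrow> sc N (\<lambda>v. if v = i then Some c else None) d = (if d = c then 1 else 0)"
  unfolding sc_def by (cases "d = c") auto

lemma sc_Wset: "c \<in> Wset N C b \<Longrightarrow> sc N b c = Max (sc N b ` C)"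
  unfolding Wset_def by auto

lemma sc_le_Max: "finite C \<Longrightarrow> c \<in> C \<Longrightarrow> sc N b c \<le> Max (sc N b ` C)"
  by simp

lemma sc_less_Max: "finite C \<Longrightarrow> c \<in> C - Wset N C b \<Longrightarrow> sc N b c < Max (sc N b ` C)"
  unfolding Wset_def by (auto simp: le_neq_implies_less)

lemma Wset_subset: "Wset N C b \<subseteq> C"
  unfolding Wset_def by auto

lemma Wset_nonempty: "finite C \<Longrightarrow> C \<noteq> {} \<Longrightarrow> Wset N C b \<noteq> {}"
proof -
  assume "finite C" "C \<noteq> {}"
  then have "Max (sc N b ` C) \<in> sc N b ` C" by simp
  then show ?thesis unfolding Wset_def by auto
qed

lemma Wset_eqI:
  assumes "finite C" "S \<subseteq> C" "S \<noteq> {}"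
    and "\<And>c. c \<in> S \<Longrightarrow> sc N b c = M" and "\<And>c. c \<in> C - S \<Longrightarrow> sc N b c < M"
  shows "Wset N C b = S"
proof -
  have "Max (sc N b ` C) = M"
  proof (rule Max_eqI)
    show "y \<le> M" if "y \<in> sc N b ` C" for y
      using that assms(4,5) by (auto intro: less_imp_le)
    obtain c where "c \<in> S" using assms(3) by blast
    then show "M \<in> sc N b ` C" using assms(2,4) by (metis image_eqI subsetD)
  qed (use assms(1) in simp)
  then have "c \<in> S" if "c \<in> C" "sc N b c = Max (sc N b ` C)" for c
    using that assms(5)[of c] by (cases "c \<in> S") auto
  then show ?thesis
    unfolding Wset_def using assms(2,4) \<open>Max (sc N b ` C) = M\<close> by auto
qed

lemma Wset_no_votes: "finite C \<Longrightarrow> C \<noteq> {} \<Longrightarrow> Wset N C (\<lambda>v. None) = C"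
  by (rule Wset_eqI[where M = 0]) (auto simp: sc_def)

lemma Wset_sole_vote: "finite C \<Longrightarrow> i \<in> N \<Longrightarrow> c \<in> C \<Longrightarrow> Wset N C (\<lambda>v. if v = i then Some c else None) = {c}"
  by (rule Wset_eqI[where M = 1]) (auto simp: sc_sole_vote)

lemma Wset_vote_for_winner:
  assumes "finite N" "finite C" "i \<in> N" "d \<in> Wset N C b" "b i \<noteq> Some d"
  shows "Wset N C (b(i := Some d)) = {d}"
proof (rule Wset_eqI[where M = "Max (sc N b ` C) + 1"])
  show "sc N (b(i := Some d)) c < Max (sc N b ` C) + 1" if "c \<in> C - {d}" for c
  proof -
    have "sc N (b(i := Some d)) c \<le> sc N b c"
      using that sc_fun_upd[OF assms(1,3), of b "Some d" c] by auto
    then show ?thesis using that sc_le_Max[OF assms(2), of c N b] by simp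
  qed
  show "sc N (b(i := Some d)) c = Max (sc N b ` C) + 1" if "c \<in> {d}" for c
    using that sc_fun_upd[OF assms(1,3), of b "Some d" d] sc_Wset[OF assms(4)] assms(5) by simp
qed (use assms(2,4) Wset_subset[of N C b] in auto)

lemma Wset_withdraw_from_winner:
  assumes "finite N" "finite C" "i \<in> N" "b i = Some c" "c \<in> Wset N C b" "Wset N C b \<noteq> {c}"
    and "\<And>d. x = Some d \<Longrightarrow> sc N b d + 1 < Max (sc N b ` C)"
  shows "Wset N C (b(i := x)) = Wset N C b - {c}"
proof (rule Wset_eqI[where M = "Max (sc N b ` C)"])
  let ?M = "Max (sc N b ` C)"
  have upd: "sc N (b(i := x)) e + (if e = c then 1 else 0) = sc N b e + (if x = Some e then 1 else 0)" for e
    using sc_fun_upd[OF assms(1,3), of b x e] assms(4) by auto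
  show "sc N (b(i := x)) e = ?M" if "e \<in> Wset N C b - {c}" for e
    using upd[of e] assms(7)[of e] sc_Wset[of e N C b] that by (cases "x = Some e") auto
  show "sc N (b(i := x)) e < ?M" if "e \<in> C - (Wset N C b - {c})" for e
  proof (cases "e = c")
    case True
    then show ?thesis using upd[of e] assms(7)[of e] sc_Wset[OF assms(5)] by (cases "x = Some e") auto
  next
    case False
    then show ?thesis
      using that upd[of e] assms(7)[of e] sc_less_Max[OF assms(2), of e N b] by (cases "x = Some e") auto
  qed
qed (use assms(2,5,6) Wset_subset[of N C b] in auto)

lemma Wset_abstain_from_loser:
  assumes "finite N" "finite C" "C \<noteq> {}" "i \<in> N" "b i = Some d" "d \<notin> Wset N C b"
  shows "Wset N C (b(i := None)) = Wset N C b"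
proof (rule Wset_eqI[where M = "Max (sc N b ` C)"])
  have upd: "sc N (b(i := None)) e + (if e = d then 1 else 0) = sc N b e" for e
    using sc_fun_upd[OF assms(1,4), of b None e] assms(5) by auto
  show "sc N (b(i := None)) e = Max (sc N b ` C)" if "e \<in> Wset N C b" for e
    using upd[of e] sc_Wset[OF that] that assms(6) by (cases "e = d") auto
  show "sc N (b(i := None)) e < Max (sc N b ` C)" if "e \<in> C - Wset N C b" for e
    using upd[of e] sc_less_Max[OF assms(2) that] by linarith
qed (use assms(2,3) Wset_subset[of N C b] Wset_nonempty[of C N b] in auto)

lemma Wset_switch_to_loser:
  assumes "finite N" "finite C" "Max (sc N b ` C) = 1" "i \<in> N" "b i = Some c"
    and "c \<in> Wset N C b" "d \<in> C - Wset N C b"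
  shows "Wset N C (b(i := Some d)) = insert d (Wset N C b - {c})"
proof (rule Wset_eqI[OF assms(2), where M = 1])
  let ?W = "Wset N C b" and ?b = "b(i := Some d)"
  have "d \<noteq> c" using assms(6,7) by auto
  have upd: "sc N ?b e + (if e = c then 1 else 0) = sc N b e + (if e = d then 1 else 0)" for e
    using sc_fun_upd[OF assms(1,4), of b "Some d" e] assms(5) by auto
  have sc_W: "sc N b e = 1" if "e \<in> ?W" for e using sc_Wset[OF that] assms(3) by simp
  have sc_not_W: "sc N b e = 0" if "e \<in> C - ?W" for e using sc_less_Max[OF assms(2) that] assms(3) by simp
  show "insert d (?W - {c}) \<subseteq> C" using assms(7) Wset_subset[of N C b] by auto
  show "sc N ?b e = 1" if "e \<in> insert d (?W - {c})" for e
    using that upd[of e] sc_W[of e] sc_not_W[of e] assms(6,7) \<open>d \<noteq> c\<close> by auto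
  show "sc N ?b e < 1" if "e \<in> C - insert d (?W - {c})" for e
    using that upd[of e] sc_W[of e] sc_not_W[of e] by (cases "e \<in> ?W") auto
qed simp

lemma card_ge_2_Diff_nonempty: "2 \<le> card A \<Longrightarrow> A - {x} \<noteq> {}"
proof
  assume "2 \<le> card A" "A - {x} = {}"
  then have "finite A" "A \<subseteq> {x}" by (auto intro: card_ge_0_finite)
  then have "card A \<le> 1" using card_mono[of "{x}" A] by simp
  then show False using \<open>2 \<le> card A\<close> by simp
qed

lemma real_Max_le_iff:
  fixes S :: "nat set"
  assumes "finite S" "S \<noteq> {}"
  shows "real (Max S) \<le> t \<longleftrightarrow> (\<forall>s\<in>S. real s \<le> t)"
proof
  assume "real (Max S) \<le> t"
  then show "\<forall>s\<in>S. real s \<le> t" using Max_ge[OF assms(1)] of_nat_le_iff order_trans by blast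
next
  assume "\<forall>s\<in>S. real s \<le> t"
  then show "real (Max S) \<le> t" using Max_in[OF assms] by blast
qed

lemma mean_add_less_mean:
  fixes f g :: "'a \<Rightarrow> real"
  assumes "finite A" "y \<in> A" "\<And>a. a \<in> A \<Longrightarrow> f a \<le> g a" "f y + 1 \<le> g y" "e < 1 / real (card A)"
  shows "sum f A / real (card A) + e < sum g A / real (card A)"
proof -
  have k: "0 < real (card A)" using assms(1,2) card_gt_0_iff by auto
  have "sum f (A - {y}) \<le> sum g (A - {y})" using assms(3) by (intro sum_mono) auto
  then have "sum f A + 1 \<le> sum g A"
    using assms(4) sum.remove[OF assms(1,2), of f] sum.remove[OF assms(1,2), of g] by linarith
  then have "sum f A / real (card A) + 1 / real (card A) \<le> sum g A / real (card A)"
    using k by (simp add: add_divide_distrib[symmetric] divide_right_mono)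
  then show ?thesis using assms(5) by linarith
qed

lemma mean_add_less:
  fixes f :: "'a \<Rightarrow> real"
  assumes "finite A" "y \<in> A" "\<And>a. a \<in> A \<Longrightarrow> f a \<le> t" "f y + 1 \<le> t" "e < 1 / real (card A)"
  shows "sum f A / real (card A) + e < t"
proof -
  have "sum f A / real (card A) + e < sum (\<lambda>_. t) A / real (card A)"
    by (rule mean_add_less_mean[OF assms(1,2) _ _ assms(5)]) (use assms(3,4) in auto)
  moreover have "card A \<noteq> 0" using assms(1,2) by auto
  ultimately show ?thesis by simp
qed

lemma mean_remove_add_less:
  fixes f :: "'a \<Rightarrow> real"
  assumes "finite A" "y \<in> A" "2 \<le> card A" "\<And>a. a \<in> A - {y} \<Longrightarrow> f a + 1 \<le> f y"
    and "e < 1 / real (card A)"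
  shows "sum f (A - {y}) / real (card (A - {y})) + e < sum f A / real (card A)"
proof -
  define k where "k = real (card A)"
  define B where "B = sum f (A - {y})"
  have k: "2 \<le> k" using assms(3) k_def by simp
  have card_rem: "real (card (A - {y})) = k - 1" using assms(1-3) by (simp add: k_def of_nat_diff)
  have sum_A: "sum f A = f y + B" using sum.remove[OF assms(1,2)] B_def by simp
  have "B \<le> (\<Sum>a\<in>A - {y}. f y - 1)" unfolding B_def using assms(4) by (intro sum_mono) force
  then have "B \<le> (k - 1) * (f y - 1)" using card_rem by simp
  then have "B / (k - 1) \<le> (f y + B - 1) / k" using k by (simp add: field_simps)
  also have "\<dots> = (f y + B) / k - 1 / k" by (simp add: diff_divide_distrib)
  finally show ?thesis using assms(5) unfolding card_rem sum_A B_def k_def by linarith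
qed

lemma mean_le:
  fixes f :: "'a \<Rightarrow> real"
  assumes "finite A" "A \<noteq> {}" "\<And>a. a \<in> A \<Longrightarrow> f a \<le> t"
  shows "sum f A / real (card A) \<le> t"
proof -
  have "0 < real (card A)" using assms(1,2) by (simp add: card_gt_0_iff)
  moreover have "sum f A \<le> real (card A) * t" by (rule sum_bounded_above) (rule assms(3))
  ultimately show ?thesis by (simp add: pos_divide_le_eq mult.commute)
qed

lemma sum_fibres:
  fixes f :: "'c \<Rightarrow> 'a::comm_semiring_1"
  assumes "finite N" "finite W" "\<And>l. l \<in> N \<Longrightarrow> g l \<in> W"
    and "\<And>c. c \<in> W \<Longrightarrow> card {l \<in> N. g l = c} = M"
  shows "(\<Sum>l\<in>N. f (g l)) = of_nat M * (\<Sum>c\<in>W. f c)"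
proof -
  have "(\<Sum>l\<in>N. f (g l)) = (\<Sum>c\<in>W. of_nat (card {l \<in> N. g l = c}) * f c)"
    using sum.group[OF assms(1,2), of g "\<lambda>l. f (g l)"] assms(3) by (simp add: image_subset_iff)
  also have "\<dots> = (\<Sum>c\<in>W. of_nat M * f c)"
    using assms(4) by simp
  finally show ?thesis by (simp add: sum_distrib_left)
qed

section \<open>Expected utility\<close>

definition expected_utility ::
    "rule \<Rightarrow> ('v \<Rightarrow> 'c \<Rightarrow> nat) \<Rightarrow> 'v set \<Rightarrow> 'c set \<Rightarrow> ('v \<Rightarrow> 'c option) \<Rightarrow> 'v \<Rightarrow> real" where
  "expected_utility R u N C b i = (\<Sum>c\<in>C. winprob R u N C b c * real (u i c))"

lemma lazy_util_eq:
  "lazy_util R u N C \<epsilon> b i = expected_utility R u N C b i + (if b i = None then \<epsilon> else 0)"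
  by (simp add: lazy_util_def expected_utility_def)

lemma vpick_vote: "b j = Some c \<Longrightarrow> c \<in> Wset N C b \<Longrightarrow> vpick u N C b j = c"
  unfolding vpick_def by simp

definition vote_profile :: "'v set \<Rightarrow> ('v \<Rightarrow> 'c) \<Rightarrow> 'v \<Rightarrow> 'c option" where
  "vote_profile N g = (\<lambda>v. if v \<in> N then Some (g v) else None)"

lemma vote_profile_cong: "(\<And>i. i \<in> N \<Longrightarrow> g i = h i) \<Longrightarrow> vote_profile N g = vote_profile N h"
  unfolding vote_profile_def by auto

lemma vote_profile_in: "i \<in> N \<Longrightarrow> vote_profile N g i = Some (g i)"
  and vote_profile_notin: "i \<notin> N \<Longrightarrow> vote_profile N g i = None"
  unfolding vote_profile_def by simp_all

text \<open>
  The tie profiles vote_profile N g that are equilibria: each winner in W gets M votes. Condition (2) of the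
  theorem is the case M = 1, with W the set of top candidates, and condition (3) the case M \<ge> 2.
\<close>

definition stable_tie ::
    "('v \<Rightarrow> 'c \<Rightarrow> nat) \<Rightarrow> 'v set \<Rightarrow> 'c set \<Rightarrow> 'c set \<Rightarrow> ('v \<Rightarrow> 'c) \<Rightarrow> nat \<Rightarrow> bool" where
  "stable_tie u N C W g M \<longleftrightarrow> W \<subseteq> C \<and> 2 \<le> card W \<and> (\<forall>i\<in>N. g i \<in> W)
     \<and> (\<forall>c\<in>W. card {i \<in> N. g i = c} = M)
     \<and> (\<forall>i\<in>N. \<forall>c\<in>W - {g i}. u i c < u i (g i))
     \<and> (\<forall>i\<in>N. \<forall>c\<in>W - {g i}. real (u i c) \<le> (\<Sum>d\<in>W. real (u i d)) / real (card W))
     \<and> (M = 1 \<longrightarrow> (\<forall>i\<in>N. \<forall>c\<in>C - {g i}. u i c < u i (g i)))"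

locale lazy_voting =
  fixes N :: "'v set" and C :: "'c set" and u :: "'v \<Rightarrow> 'c \<Rightarrow> nat" and \<epsilon> :: real
  assumes finite_N: "finite N" and finite_C: "finite C"
    and card_N: "2 \<le> card N" and card_C: "2 \<le> card C"
    and inj_u: "\<forall>i\<in>N. inj_on (u i) C"
    and eps_pos: "0 < \<epsilon>" and eps_less_C: "\<epsilon> < 1 / real (card C)"
    and eps_less_N: "\<epsilon> < 1 / real (card N)"
begin

lemma N_nonempty: "N \<noteq> {}"
  using card_N by auto

lemma C_nonempty: "C \<noteq> {}"
  using card_C by auto

lemma eps_less_subset: "A \<subseteq> C \<Longrightarrow> A \<noteq> {} \<Longrightarrow> \<epsilon> < 1 / real (card A)"
proof -
  assume "A \<subseteq> C" "A \<noteq> {}"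
  moreover have "finite A" using \<open>A \<subseteq> C\<close> finite_subset finite_C by auto
  ultimately have "0 < card A" "card A \<le> card C"
    using card_mono[OF finite_C] by (auto simp: card_gt_0_iff)
  then have "1 / real (card C) \<le> 1 / real (card A)" by (simp add: frac_le)
  then show ?thesis using eps_less_C by linarith
qed

lemma fav_in: "S \<subseteq> C \<Longrightarrow> S \<noteq> {} \<Longrightarrow> i \<in> N \<Longrightarrow> fav u i S \<in> S"
  using fav_greatest(1)[of S u i] finite_subset[OF _ finite_C] inj_on_subset[of "u i" C S] inj_u
  by simp

lemma fav_greater: "S \<subseteq> C \<Longrightarrow> i \<in> N \<Longrightarrow> d \<in> S \<Longrightarrow> d \<noteq> fav u i S \<Longrightarrow> u i d < u i (fav u i S)"
  using fav_greatest(2)[of S u i d] finite_subset[OF _ finite_C] inj_on_subset[of "u i" C S] inj_u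
  by auto

lemma fav_ge: "S \<subseteq> C \<Longrightarrow> i \<in> N \<Longrightarrow> d \<in> S \<Longrightarrow> u i d \<le> u i (fav u i S)"
  using fav_greater[of S i d] by (cases "d = fav u i S") auto

lemma vpick_in_Wset: "j \<in> N \<Longrightarrow> vpick u N C b j \<in> Wset N C b"
  using fav_in[OF Wset_subset Wset_nonempty[OF finite_C C_nonempty]]
  unfolding vpick_def by (auto split: option.split)

lemma card_Wset_ge_2: "card (Wset N C b) \<noteq> 1 \<Longrightarrow> 2 \<le> card (Wset N C b)"
  using Wset_nonempty[OF finite_C C_nonempty, of N b] finite_subset[OF Wset_subset finite_C, of N b]
  by (cases "card (Wset N C b)") auto

lemma expected_utility_unique_winner:
  assumes "Wset N C b = {c}"
  shows "expected_utility R u N C b i = real (u i c)"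
proof -
  have "c \<in> C" using Wset_subset[of N C b] assms by auto
  have "expected_utility R u N C b i = (\<Sum>x\<in>C. if x = c then real (u i x) else 0)"
    unfolding expected_utility_def winprob_def assms by (intro sum.cong) auto
  then show ?thesis using finite_C \<open>c \<in> C\<close> by simp
qed

lemma expected_utility_RC:
  "expected_utility RC u N C b i = (\<Sum>c\<in>Wset N C b. real (u i c)) / real (card (Wset N C b))"
proof (cases "card (Wset N C b) = 1")
  case True
  then obtain c where "Wset N C b = {c}" by (rule card_1_singletonE)
  then show ?thesis using expected_utility_unique_winner by simp
next
  case False
  let ?W = "Wset N C b"
  have "expected_utility RC u N C b i = (\<Sum>x\<in>C. if x \<in> ?W then real (u i x) / real (card ?W) else 0)"
    unfolding expected_utility_def winprob_def using False by (intro sum.cong) auto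
  also have "\<dots> = (\<Sum>x\<in>C \<inter> ?W. real (u i x) / real (card ?W))"
    by (simp add: sum.inter_restrict[OF finite_C])
  also have "C \<inter> ?W = ?W" using Wset_subset[of N C b] by blast
  finally show ?thesis by (simp add: sum_divide_distrib)
qed

lemma expected_utility_RV:
  "expected_utility RV u N C b i = (\<Sum>j\<in>N. real (u i (vpick u N C b j))) / real (card N)"
proof (cases "card (Wset N C b) = 1")
  case True
  then obtain c where c: "Wset N C b = {c}" by (rule card_1_singletonE)
  then have "vpick u N C b j = c" if "j \<in> N" for j using vpick_in_Wset[OF that, of b] by simp
  then show ?thesis using c expected_utility_unique_winner N_nonempty finite_N by simp
next
  case False
  have "expected_utility RV u N C b i
      = (\<Sum>x\<in>C. real (card {j \<in> N. vpick u N C b j = x}) * real (u i x)) / real (card N)"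
    unfolding expected_utility_def winprob_def using False by (simp add: sum_divide_distrib)
  also have "(\<Sum>x\<in>C. real (card {j \<in> N. vpick u N C b j = x}) * real (u i x))
      = (\<Sum>j\<in>N. real (u i (vpick u N C b j)))"
    using sum.group[OF finite_N finite_C, of "vpick u N C b" "\<lambda>j. real (u i (vpick u N C b j))"]
      vpick_in_Wset Wset_subset by (force intro: sum.cong)
  finally show ?thesis .
qed

lemma expected_utility_le:
  assumes "\<And>c. c \<in> Wset N C b \<Longrightarrow> u i c \<le> t"
  shows "expected_utility R u N C b i \<le> real t"
proof (cases R)
  case RC
  show ?thesis unfolding RC expected_utility_RC
    by (rule mean_le) (use assms Wset_nonempty[OF finite_C C_nonempty] finite_subset[OF Wset_subset finite_C] in auto)
next
  case RV
  show ?thesis unfolding RV expected_utility_RV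
    by (rule mean_le) (use assms vpick_in_Wset finite_N N_nonempty in auto)
qed

lemma expected_utility_gain:
  assumes "j \<in> N" "b j = Some a" "a \<in> Wset N C b" "\<And>c. c \<in> Wset N C b \<Longrightarrow> t \<le> u j c" "t < u j a"
  shows "real t + \<epsilon> < expected_utility R u N C b j"
proof (cases R)
  case RC
  let ?W = "Wset N C b"
  have finW: "finite ?W" using finite_subset[OF Wset_subset finite_C] .
  have "(\<Sum>c\<in>?W. real t) / real (card ?W) + \<epsilon> < (\<Sum>c\<in>?W. real (u j c)) / real (card ?W)"
  proof (rule mean_add_less_mean[OF finW assms(3)])
    show "real t \<le> real (u j c)" if "c \<in> ?W" for c using assms(4)[OF that] by simp
    show "real t + 1 \<le> real (u j a)" using assms(5) by linarith
    show "\<epsilon> < 1 / real (card ?W)" by (rule eps_less_subset[OF Wset_subset]) (use assms(3) in blast)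
  qed
  moreover have "card ?W \<noteq> 0" using finW assms(3) by auto
  ultimately show ?thesis using RC by (simp add: expected_utility_RC)
next
  case RV
  let ?v = "vpick u N C b"
  have "(\<Sum>l\<in>N. real t) / real (card N) + \<epsilon> < (\<Sum>l\<in>N. real (u j (?v l))) / real (card N)"
  proof (rule mean_add_less_mean[OF finite_N assms(1) _ _ eps_less_N])
    show "real t \<le> real (u j (?v l))" if "l \<in> N" for l using assms(4)[OF vpick_in_Wset[OF that, of b]] by simp
    show "real t + 1 \<le> real (u j (?v j))" using assms(5) vpick_vote[of b j a N C u, OF assms(2,3)] by simp
  qed
  then show ?thesis using RV finite_N N_nonempty by (simp add: expected_utility_RV)
qed

lemma expected_utility_less_fav:
  assumes votes: "0 < Max (sc N b ` C)" and tie: "card (Wset N C b) \<noteq> 1" and l: "l \<in> N"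
  shows "expected_utility R u N C b l + \<epsilon> < real (u l (fav u l (Wset N C b)))"
proof -
  let ?W = "Wset N C b" and ?f = "fav u l (Wset N C b)"
  have finW: "finite ?W" using finite_subset[OF Wset_subset finite_C] .
  obtain d where d: "d \<in> ?W" "d \<noteq> ?f" using card_ge_2_Diff_nonempty[OF card_Wset_ge_2[OF tie], of ?f] by blast
  have ge: "real (u l e) \<le> real (u l ?f)" if "e \<in> ?W" for e using fav_ge[OF Wset_subset l that] by simp
  have less: "real (u l d) + 1 \<le> real (u l ?f)" using fav_greater[OF Wset_subset l d] by linarith
  show ?thesis
  proof (cases R)
    case RC
    have "\<epsilon> < 1 / real (card ?W)" by (rule eps_less_subset[OF Wset_subset]) (use d(1) in blast)
    then show ?thesis using mean_add_less[of ?W d "\<lambda>e. real (u l e)", OF finW d(1) ge less] RC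
      by (simp add: expected_utility_RC)
  next
    case RV
    have "0 < sc N b d" using sc_Wset[OF d(1)] votes by simp
    then have "\<exists>y\<in>N. b y = Some d" by (simp add: sc_pos_iff[OF finite_N])
    then obtain y where y: "y \<in> N" "b y = Some d" by blast
    have "(\<Sum>j\<in>N. real (u l (vpick u N C b j))) / real (card N) + \<epsilon> < real (u l ?f)"
    proof (rule mean_add_less[OF finite_N y(1) _ _ eps_less_N])
      show "real (u l (vpick u N C b j)) \<le> real (u l ?f)" if "j \<in> N" for j
        using ge[OF vpick_in_Wset[OF that]] .
      show "real (u l (vpick u N C b y)) + 1 \<le> real (u l ?f)" using less vpick_vote[OF y(2) d(1)] by simp
    qed
    then show ?thesis using RV by (simp add: expected_utility_RV)
  qed
qed

lemma expected_utility_vote_for_winners: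
  assumes "\<And>l. l \<in> N \<Longrightarrow> \<exists>c\<in>Wset N C b. b l = Some c"
  shows "expected_utility R u N C b i
    = (\<Sum>c\<in>Wset N C b. real (u i c)) / real (card (Wset N C b))"
proof (cases R)
  case RV
  let ?W = "Wset N C b" and ?M = "Max (sc N b ` C)" and ?g = "\<lambda>l. the (b l)"
  have vote: "b l = Some (?g l)" "?g l \<in> ?W" if "l \<in> N" for l using assms[OF that] by auto
  have fibre: "card {l \<in> N. ?g l = c} = ?M" if "c \<in> ?W" for c
  proof -
    have "{l \<in> N. ?g l = c} = {l \<in> N. b l = Some c}" using vote by auto
    then show ?thesis using sc_Wset[OF that] unfolding sc_def by simp
  qed
  have finW: "finite ?W" using finite_subset[OF Wset_subset finite_C] .
  have "(\<Sum>l\<in>N. real (u i (?g l))) = real ?M * (\<Sum>c\<in>?W. real (u i c))"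
    by (rule sum_fibres[OF finite_N finW vote(2) fibre])
  moreover have "real (card N) = real ?M * real (card ?W)"
    using sum_fibres[OF finite_N finW vote(2) fibre, of "\<lambda>_. 1::real"] by simp
  moreover have "vpick u N C b l = ?g l" if "l \<in> N" for l using vote[OF that] by (simp add: vpick_vote)
  moreover have "real ?M \<noteq> 0" using calculation(2) finite_N N_nonempty by auto
  ultimately show ?thesis unfolding RV expected_utility_RV by simp
qed (simp add: expected_utility_RC)

lemma expected_utility_abstain_from_loser:
  assumes "l \<in> N" "b l = Some d" "d \<notin> Wset N C b"
  shows "expected_utility R u N C (b(l := None)) i = expected_utility R u N C b i"
proof -
  have W: "Wset N C (b(l := None)) = Wset N C b"
    by (rule Wset_abstain_from_loser[OF finite_N finite_C C_nonempty assms])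
  have "vpick u N C (b(l := None)) j = vpick u N C b j" for j
    unfolding vpick_def W using assms(2,3) by (cases "j = l") auto
  then show ?thesis by (cases R) (simp_all add: expected_utility_RC expected_utility_RV W)
qed

lemma expected_utility_switch_to_loser:
  assumes votes: "\<And>l. l \<in> N \<Longrightarrow> \<exists>c\<in>Wset N C b. b l = Some c"
    and M: "Max (sc N b ` C) = 1" and i: "i \<in> N" "b i = Some c" and d: "d \<in> C - Wset N C b"
  shows "expected_utility R u N C (b(i := Some d)) j
    = ((\<Sum>e\<in>Wset N C b. real (u j e)) - real (u j c) + real (u j d)) / real (card (Wset N C b))"
proof -
  let ?W = "Wset N C b" and ?b = "b(i := Some d)"
  have finW: "finite ?W" using finite_subset[OF Wset_subset finite_C] .
  have cW: "c \<in> ?W" using votes[OF i(1)] i(2) by auto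
  have W': "Wset N C ?b = insert d (?W - {c})"
    by (rule Wset_switch_to_loser[OF finite_N finite_C M i cW d])
  have only_i: "b l \<noteq> Some c" if "l \<in> N" "l \<noteq> i" for l
  proof
    assume "b l = Some c"
    then have "{i, l} \<subseteq> {l \<in> N. b l = Some c}" using that i by auto
    then have "2 \<le> sc N b c"
      unfolding sc_def using that(2) finite_N card_mono[of "{l \<in> N. b l = Some c}" "{i, l}"] by auto
    then show False using sc_Wset[OF cW] M by simp
  qed
  have "\<exists>e\<in>Wset N C ?b. ?b l = Some e" if "l \<in> N" for l
    using votes[OF that] only_i[OF that] unfolding W' by (cases "l = i") auto
  then have "expected_utility R u N C ?b j
      = (\<Sum>e\<in>insert d (?W - {c}). real (u j e)) / real (card (insert d (?W - {c})))"
    by (subst expected_utility_vote_for_winners) (simp_all add: W')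
  also have "(\<Sum>e\<in>insert d (?W - {c}). real (u j e)) = (\<Sum>e\<in>?W. real (u j e)) - real (u j c) + real (u j d)"
    using finW cW d by (simp add: sum_diff1 algebra_simps)
  also have "card (insert d (?W - {c})) = card ?W"
    using finW cW d card_Suc_Diff1[OF finW cW] by simp
  finally show ?thesis .
qed

lemma PNE_abstain: "is_PNE R u N C \<epsilon> b \<Longrightarrow> i \<in> N \<Longrightarrow>
    lazy_util R u N C \<epsilon> (b(i := None)) i \<le> lazy_util R u N C \<epsilon> b i"
  unfolding is_PNE_def by blast

lemma PNE_vote: "is_PNE R u N C \<epsilon> b \<Longrightarrow> i \<in> N \<Longrightarrow> c \<in> C \<Longrightarrow>
    lazy_util R u N C \<epsilon> (b(i := Some c)) i \<le> lazy_util R u N C \<epsilon> b i"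
  unfolding is_PNE_def by blast

lemma PNE_ballot:
  assumes "is_PNE R u N C \<epsilon> b"
  shows "b i = Some c \<Longrightarrow> i \<in> N \<and> c \<in> C"
  using assms unfolding is_PNE_def ballots_def by (cases "i \<in> N") auto

lemma PNE_vote_for_winner_le:
  assumes "is_PNE R u N C \<epsilon> b" "i \<in> N" "d \<in> Wset N C b" "b i \<noteq> Some d"
  shows "real (u i d) \<le> lazy_util R u N C \<epsilon> b i"
proof -
  have "Wset N C (b(i := Some d)) = {d}" by (rule Wset_vote_for_winner[OF finite_N finite_C assms(2-4)])
  then have "lazy_util R u N C \<epsilon> (b(i := Some d)) i = real (u i d)"
    by (simp add: lazy_util_eq expected_utility_unique_winner)
  then show ?thesis using PNE_vote[OF assms(1,2), of d] assms(3) Wset_subset[of N C b] by auto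
qed

lemma PNE_Max_pos:
  assumes P: "is_PNE R u N C \<epsilon> b" and votes: "b \<noteq> (\<lambda>v. None)"
  shows "0 < Max (sc N b ` C)"
proof -
  have "\<exists>v. b v \<noteq> None" using votes by auto
  then obtain v c where bv: "b v = Some c" by auto
  then have "v \<in> N" "c \<in> C" using PNE_ballot[OF P bv] by auto
  then have "0 < sc N b c" unfolding sc_pos_iff[OF finite_N] using bv by blast
  then show ?thesis using sc_le_Max[OF finite_C \<open>c \<in> C\<close>, of N b] by linarith
qed

section \<open>The equilibria\<close>

lemma cond1_less: "cond1 u N C c \<Longrightarrow> i \<in> N \<Longrightarrow> d \<in> C \<Longrightarrow> d \<noteq> c \<Longrightarrow> u i d < u i c"
  unfolding cond1_def using fav_greater[OF order_refl] by auto

lemma cond1_le: "cond1 u N C c \<Longrightarrow> i \<in> N \<Longrightarrow> d \<in> C \<Longrightarrow> u i d \<le> u i c"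
  using cond1_less[of c i d] by (cases "d = c") auto

lemma cond1_expected_utility_le:
  assumes "cond1 u N C c" "i \<in> N"
  shows "expected_utility R u N C b i \<le> real (u i c)"
proof (rule expected_utility_le)
  fix d assume "d \<in> Wset N C b"
  then have "d \<in> C" using Wset_subset[of N C b] by blast
  then show "u i d \<le> u i c" using cond1_le[OF assms] by blast
qed

lemma cond1_sole_voter_PNE:
  assumes "cond1 u N C c" "i \<in> N"
  shows "is_PNE RC u N C \<epsilon> (\<lambda>v. if v = i then Some c else None)"
  unfolding is_PNE_def
proof (intro conjI ballI)
  let ?b = "\<lambda>v. if v = i then Some c else None"
  have cC: "c \<in> C" using assms(1) unfolding cond1_def by blast
  show "?b \<in> ballots N C" using assms(2) cC unfolding ballots_def by auto
  have current: "lazy_util RC u N C \<epsilon> ?b j = real (u j c) + (if j = i then 0 else \<epsilon>)" for j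
    by (simp add: lazy_util_eq expected_utility_unique_winner Wset_sole_vote[OF finite_C assms(2) cC])
  fix j x assume "j \<in> N" "x \<in> insert None (Some ` C)"
  have deviation: "lazy_util RC u N C \<epsilon> (?b(j := x)) j \<le> real (u j c) + (if x = None then \<epsilon> else 0)"
    using cond1_expected_utility_le[OF assms(1) \<open>j \<in> N\<close>] by (simp add: lazy_util_eq)
  show "lazy_util RC u N C \<epsilon> (?b(j := x)) j \<le> lazy_util RC u N C \<epsilon> ?b j"
  proof (cases "j = i \<and> x = None")
    case True
    obtain d where d: "d \<in> C" "d \<noteq> c" using card_ge_2_Diff_nonempty[OF card_C, of c] by blast
    have "(\<Sum>e\<in>C. real (u i e)) / real (card C) + \<epsilon> < real (u i c)"
    proof (rule mean_add_less[OF finite_C d(1) _ _ eps_less_C])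
      show "real (u i e) \<le> real (u i c)" if "e \<in> C" for e using cond1_le[OF assms that] by simp
      show "real (u i d) + 1 \<le> real (u i c)" using cond1_less[OF assms d] by linarith
    qed
    moreover have "?b(j := x) = (\<lambda>v. None)" using True by auto
    ultimately show ?thesis using True current[of i]
      by (simp add: lazy_util_eq expected_utility_RC Wset_no_votes[OF finite_C C_nonempty])
  next
    case False
    then have "(if x = None then \<epsilon> else 0) \<le> (if j = i then 0 else \<epsilon>)" using eps_pos by auto
    then show ?thesis using deviation current[of j] by linarith
  qed
qed

lemma cond1_abstention_PNE:
  assumes "cond1 u N C c"
  shows "is_PNE RV u N C \<epsilon> (\<lambda>v. None)"
  unfolding is_PNE_def
proof (intro conjI ballI)
  show "(\<lambda>v. None) \<in> ballots N C" unfolding ballots_def by simp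
  fix j x assume "j \<in> N" "x \<in> insert None (Some ` C)"
  have "vpick u N C (\<lambda>v. None) l = c" if "l \<in> N" for l
    using assms that unfolding cond1_def vpick_def Wset_no_votes[OF finite_C C_nonempty] by simp
  then have "expected_utility RV u N C (\<lambda>v. None) j = real (u j c)"
    using finite_N N_nonempty by (simp add: expected_utility_RV)
  then show "lazy_util RV u N C \<epsilon> ((\<lambda>v. None)(j := x)) j \<le> lazy_util RV u N C \<epsilon> (\<lambda>v. None) j"
    using cond1_expected_utility_le[OF assms \<open>j \<in> N\<close>, of RV "(\<lambda>v. None)(j := x)"] eps_pos
    by (simp add: lazy_util_eq)
qed

context
  fixes W :: "'c set" and g :: "'v \<Rightarrow> 'c" and M :: nat
  assumes tie: "stable_tie u N C W g M"
begin

lemma tie_W: "W \<subseteq> C" "2 \<le> card W" "finite W"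
  using tie finite_subset[OF _ finite_C] unfolding stable_tie_def by auto

lemma tie_vote: "i \<in> N \<Longrightarrow> g i \<in> W"
  using tie unfolding stable_tie_def by blast

lemma tie_fibre: "c \<in> W \<Longrightarrow> card {i \<in> N. g i = c} = M"
  using tie unfolding stable_tie_def by blast

lemma tie_prefers: "i \<in> N \<Longrightarrow> c \<in> W - {g i} \<Longrightarrow> u i c < u i (g i)"
  using tie unfolding stable_tie_def by blast

lemma tie_average:
  "i \<in> N \<Longrightarrow> c \<in> W - {g i} \<Longrightarrow> real (u i c) \<le> (\<Sum>d\<in>W. real (u i d)) / real (card W)"
  using tie unfolding stable_tie_def by blast

lemma tie_top: "M = 1 \<Longrightarrow> i \<in> N \<Longrightarrow> c \<in> C - {g i} \<Longrightarrow> u i c < u i (g i)"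
  using tie unfolding stable_tie_def by blast

lemma tie_sum_voters:
  fixes f :: "'c \<Rightarrow> 'a::comm_semiring_1"
  shows "(\<Sum>l\<in>N. f (g l)) = of_nat M * (\<Sum>c\<in>W. f c)"
  by (rule sum_fibres[OF finite_N tie_W(3) tie_vote tie_fibre])

lemma tie_card_N: "card N = M * card W"
  using tie_sum_voters[of "\<lambda>_. 1 :: nat"] by simp

lemma tie_M_pos: "0 < M"
  using tie_card_N card_N by (cases M) auto

lemma tie_mean_voters:
  fixes f :: "'c \<Rightarrow> real"
  shows "(\<Sum>l\<in>N. f (g l)) / real (card N) = (\<Sum>c\<in>W. f c) / real (card W)"
  using tie_sum_voters[of f] tie_card_N tie_M_pos by simp

lemma tie_sc: "sc N (vote_profile N g) c = (if c \<in> W then M else 0)"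
proof -
  have votes: "{j \<in> N. vote_profile N g j = Some c} = {j \<in> N. g j = c}"
    unfolding vote_profile_def by auto
  show ?thesis
  proof (cases "c \<in> W")
    case True
    then show ?thesis using tie_fibre[OF True] unfolding sc_def votes by simp
  next
    case False
    then have none: "{j \<in> N. g j = c} = {}" using tie_vote by auto
    show ?thesis using False unfolding sc_def votes none by simp
  qed
qed

lemma tie_Wset: "Wset N C (vote_profile N g) = W"
  using tie_W tie_M_pos tie_sc by (intro Wset_eqI[OF finite_C, where M = M]) auto

lemma tie_lazy_util:
  assumes "i \<in> N"
  shows "lazy_util R u N C \<epsilon> (vote_profile N g) i = (\<Sum>c\<in>W. real (u i c)) / real (card W)"
proof -
  have "\<exists>c\<in>Wset N C (vote_profile N g). vote_profile N g l = Some c" if "l \<in> N" for l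
    using that tie_vote tie_Wset by (simp add: vote_profile_in)
  then show ?thesis
    using assms by (simp add: lazy_util_eq expected_utility_vote_for_winners tie_Wset vote_profile_in)
qed

lemma tie_switch_to_winner:
  assumes "i \<in> N" "d \<in> W - {g i}"
  shows "lazy_util R u N C \<epsilon> ((vote_profile N g)(i := Some d)) i \<le> lazy_util R u N C \<epsilon> (vote_profile N g) i"
proof -
  have "Wset N C ((vote_profile N g)(i := Some d)) = {d}"
    using assms tie_Wset by (intro Wset_vote_for_winner[OF finite_N finite_C]) (auto simp: vote_profile_in)
  then show ?thesis
    using tie_average[OF assms] tie_lazy_util[OF assms(1)]
    by (simp add: lazy_util_eq expected_utility_unique_winner)
qed

lemma tie_switch_to_loser:
  assumes "M = 1" "i \<in> N" "d \<in> C - W"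
  shows "lazy_util R u N C \<epsilon> ((vote_profile N g)(i := Some d)) i \<le> lazy_util R u N C \<epsilon> (vote_profile N g) i"
proof -
  let ?b = "vote_profile N g"
  have "expected_utility R u N C (?b(i := Some d)) i
      = ((\<Sum>e\<in>W. real (u i e)) - real (u i (g i)) + real (u i d)) / real (card W)"
  proof (subst expected_utility_switch_to_loser[where c = "g i"])
    show "\<exists>c\<in>Wset N C ?b. ?b l = Some c" if "l \<in> N" for l
      using that tie_vote tie_Wset by (simp add: vote_profile_in)
    show "Max (sc N ?b ` C) = 1" using sc_Wset[of "g i" N C ?b] tie_sc tie_Wset tie_vote assms by simp
  qed (use assms tie_Wset tie_vote in \<open>simp_all add: vote_profile_in\<close>)
  moreover have "u i d < u i (g i)" using tie_top[OF assms(1,2)] assms(3) tie_vote[OF assms(2)] by auto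
  ultimately show ?thesis
    using tie_lazy_util[OF assms(2)] tie_W by (simp add: lazy_util_eq divide_right_mono)
qed

lemma tie_withdraw_Wset:
  assumes "i \<in> N" and x: "\<And>d. x = Some d \<Longrightarrow> d \<notin> W \<and> M \<noteq> 1"
  shows "Wset N C ((vote_profile N g)(i := x)) = W - {g i}"
proof -
  let ?b = "vote_profile N g"
  have gi: "g i \<in> W" "?b i = Some (g i)" using tie_vote[OF assms(1)] assms(1) by (auto simp: vote_profile_in)
  show ?thesis
  proof (subst Wset_withdraw_from_winner[of N C i ?b "g i" x, OF finite_N finite_C assms(1) gi(2)])
    show "sc N ?b d + 1 < Max (sc N ?b ` C)" if "x = Some d" for d
      using x[OF that] tie_M_pos sc_Wset[of "g i" N C ?b] gi(1) tie_sc tie_Wset by simp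
    show "Wset N C ?b \<noteq> {g i}" using tie_W(2) tie_Wset by auto
  qed (use gi tie_Wset in simp_all)
qed

lemma tie_withdraw_expected_utility:
  assumes i: "i \<in> N" and W': "Wset N C ((vote_profile N g)(i := x)) = W - {g i}"
  shows "expected_utility R u N C ((vote_profile N g)(i := x)) i + \<epsilon>
    < (\<Sum>c\<in>W. real (u i c)) / real (card W)"
proof (cases R)
  case RC
  have "real (u i c) + 1 \<le> real (u i (g i))" if "c \<in> W - {g i}" for c
    using tie_prefers[OF i that] by linarith
  then have "(\<Sum>c\<in>W - {g i}. real (u i c)) / real (card (W - {g i})) + \<epsilon>
      < (\<Sum>c\<in>W. real (u i c)) / real (card W)"
    using tie_W eps_less_subset[of W] tie_vote[OF i] by (intro mean_remove_add_less) auto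
  then show ?thesis using RC W' by (simp add: expected_utility_RC)
next
  case RV
  let ?b = "(vote_profile N g)(i := x)"
  let ?v = "vpick u N C ?b"
  have v: "?v j \<in> W - {g i}" if "j \<in> N" for j using vpick_in_Wset[OF that, of ?b] W' by simp
  have "(\<Sum>j\<in>N. real (u i (?v j))) / real (card N) + \<epsilon> < (\<Sum>j\<in>N. real (u i (g j))) / real (card N)"
  proof (rule mean_add_less_mean[OF finite_N i _ _ eps_less_N])
    show "real (u i (?v j)) \<le> real (u i (g j))" if "j \<in> N" for j
    proof (cases "j \<noteq> i \<and> g j \<noteq> g i")
      case True
      then have "?v j = g j" using that tie_vote W' by (intro vpick_vote) (auto simp: vote_profile_in)
      then show ?thesis by simp
    next
      case False
      then show ?thesis using tie_prefers[OF i v[OF that]] by auto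
    qed
    show "real (u i (?v i)) + 1 \<le> real (u i (g i))" using tie_prefers[OF i v[OF i]] by linarith
  qed
  then show ?thesis using RV tie_mean_voters[of "\<lambda>c. real (u i c)"] by (simp add: expected_utility_RV)
qed

lemma tie_withdraw:
  assumes "i \<in> N" and x: "\<And>d. x = Some d \<Longrightarrow> d \<notin> W \<and> M \<noteq> 1"
  shows "lazy_util R u N C \<epsilon> ((vote_profile N g)(i := x)) i < lazy_util R u N C \<epsilon> (vote_profile N g) i"
proof -
  let ?b = "(vote_profile N g)(i := x)"
  have W': "Wset N C ?b = W - {g i}" using assms by (rule tie_withdraw_Wset)
  have "lazy_util R u N C \<epsilon> ?b i \<le> expected_utility R u N C ?b i + \<epsilon>"
    using eps_pos by (simp add: lazy_util_eq)
  then show ?thesis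
    using tie_withdraw_expected_utility[where R = R, OF assms(1) W'] tie_lazy_util[where R = R, OF assms(1)]
    by linarith
qed

lemma stable_tie_PNE: "is_PNE R u N C \<epsilon> (vote_profile N g)"
  unfolding is_PNE_def
proof (intro conjI ballI)
  show "vote_profile N g \<in> ballots N C"
    using tie_vote tie_W unfolding ballots_def by (auto simp: vote_profile_in vote_profile_notin)
  fix i x assume i: "i \<in> N" and "x \<in> insert None (Some ` C)"
  then consider "x = None" | d where "x = Some d" "d \<in> C" by blast
  then show "lazy_util R u N C \<epsilon> ((vote_profile N g)(i := x)) i \<le> lazy_util R u N C \<epsilon> (vote_profile N g) i"
  proof cases
    case 1
    have "lazy_util R u N C \<epsilon> ((vote_profile N g)(i := x)) i < lazy_util R u N C \<epsilon> (vote_profile N g) i"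
      by (rule tie_withdraw[OF i]) (simp add: 1)
    then show ?thesis by simp
  next
    case (2 d)
    consider "d = g i" | "d \<in> W - {g i}" | "d \<in> C - W" "M = 1" | "d \<in> C - W" "M \<noteq> 1"
      using \<open>d \<in> C\<close> by blast
    then show ?thesis
    proof cases
      case 1
      then have "(vote_profile N g)(i := x) = vote_profile N g" using i 2 by (auto simp: vote_profile_in)
      then show ?thesis by simp
    qed (use 2 i tie_switch_to_winner tie_switch_to_loser tie_withdraw[OF i, of x] in \<open>auto intro: less_imp_le\<close>)
  qed
qed

end

lemma cond2_stable_tie:
  assumes "cond2 u N C"
  shows "stable_tie u N C ((\<lambda>i. fav u i C) ` N) (\<lambda>i. fav u i C) 1"
proof -
  let ?a = "\<lambda>i. fav u i C" and ?W = "(\<lambda>i. fav u i C) ` N"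
  have inj: "inj_on ?a N" and avg:
    "\<And>l. l \<in> N \<Longrightarrow> real (Max ((\<lambda>i. u l (?a i)) ` (N - {l}))) \<le> real (\<Sum>i\<in>N. u l (?a i)) / real (card N)"
    using assms unfolding cond2_def by auto
  have aC: "?a i \<in> C" if "i \<in> N" for i using fav_in[OF order_refl C_nonempty that] .
  have card_W: "card ?W = card N" using card_image[OF inj] .
  have mean: "real (\<Sum>i\<in>N. u l (?a i)) / real (card N) = (\<Sum>c\<in>?W. real (u l c)) / real (card ?W)" for l
    using sum.reindex[OF inj, of "\<lambda>c. real (u l c)"] card_W by simp
  show ?thesis unfolding stable_tie_def
  proof (intro conjI ballI impI)
    show "?W \<subseteq> C" using aC by blast
    show "2 \<le> card ?W" using card_W card_N by simp
    show "card {i \<in> N. ?a i = c} = 1" if "c \<in> ?W" for c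
    proof -
      obtain j where "j \<in> N" "c = ?a j" using \<open>c \<in> ?W\<close> by blast
      then have "{i \<in> N. ?a i = c} = {j}" using inj_onD[OF inj] by auto
      then show ?thesis by simp
    qed
    show "real (u l c) \<le> (\<Sum>d\<in>?W. real (u l d)) / real (card ?W)"
      if l: "l \<in> N" and c: "c \<in> ?W - {?a l}" for l c
    proof -
      let ?S = "(\<lambda>i. u l (?a i)) ` (N - {l})"
      obtain j where j: "j \<in> N - {l}" "c = ?a j" using c by blast
      have "finite ?S" using finite_N by simp
      moreover have "?S \<noteq> {}" using card_ge_2_Diff_nonempty[OF card_N] by blast
      ultimately have "\<forall>s\<in>?S. real s \<le> real (\<Sum>i\<in>N. u l (?a i)) / real (card N)"
        using avg[OF l] real_Max_le_iff by blast
      then show ?thesis using j unfolding mean by auto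
    qed
  qed (use fav_greater[OF order_refl] aC in auto)
qed

lemma stable_tie_cond2:
  assumes tie: "stable_tie u N C W g 1"
  shows "cond2 u N C \<and> (\<forall>i\<in>N. fav u i C = g i)"
proof -
  have fav_C: "fav u i C = g i" if "i \<in> N" for i
    using tie_W(1)[OF tie] tie_vote[OF tie that] tie_top[OF tie _ that] by (intro fav_eqI) auto
  have inj: "inj_on g N"
  proof (rule inj_onI)
    fix x y assume "x \<in> N" "y \<in> N" "g x = g y"
    then have "{x, y} \<subseteq> {i \<in> N. g i = g x}" by auto
    then have "card {x, y} \<le> 1"
      using card_mono[of "{i \<in> N. g i = g x}" "{x, y}"] tie_fibre[OF tie tie_vote[OF tie \<open>x \<in> N\<close>]] finite_N
      by simp
    then show "x = y" by (cases "x = y") auto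
  qed
  have mean: "real (\<Sum>i\<in>N. u l (g i)) / real (card N) = (\<Sum>c\<in>W. real (u l c)) / real (card W)" for l
    using tie_mean_voters[OF tie, of "\<lambda>c. real (u l c)"] by simp
  have "real (Max ((\<lambda>i. u l (g i)) ` (N - {l}))) \<le> real (\<Sum>i\<in>N. u l (g i)) / real (card N)"
    if l: "l \<in> N" for l
  proof -
    have "g i \<in> W - {g l}" if "i \<in> N - {l}" for i
      using that tie_vote[OF tie] inj_onD[OF inj] l by blast
    moreover have "finite ((\<lambda>i. u l (g i)) ` (N - {l}))" using finite_N by simp
    moreover have "(\<lambda>i. u l (g i)) ` (N - {l}) \<noteq> {}"
      using card_ge_2_Diff_nonempty[OF card_N, of l] by blast
    ultimately show ?thesis
      unfolding mean using tie_average[OF tie l] real_Max_le_iff by (simp add: real_Max_le_iff)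
  qed
  then show ?thesis using inj fav_C unfolding cond2_def by (simp cong: inj_on_cong)
qed

lemma cond3_stable_tie:
  assumes "cond3 u N C X"
  shows "\<exists>M. stable_tie u N C X (\<lambda>i. fav u i X) M"
proof -
  obtain g where XC: "X \<subseteq> C" and k: "2 \<le> card X" "2 * card X \<le> card N"
    and gX: "\<forall>i\<in>N. g i \<in> X" and fibre: "\<forall>c\<in>X. card {i \<in> N. g i = c} * card X = card N"
    and prefers: "\<forall>i\<in>N. \<forall>c\<in>X - {g i}. u i c < u i (g i)"
    and avg: "\<forall>i\<in>N. real (\<Sum>c\<in>X. u i c) / real (card X) \<ge> real (Max (u i ` (X - {g i})))"
    using assms unfolding cond3_def by blast
  have finX: "finite X" using finite_subset[OF XC finite_C] .
  have fav_X: "fav u i X = g i" if "i \<in> N" for i using gX prefers that by (intro fav_eqI) auto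
  let ?M = "card N div card X"
  have M: "card {i \<in> N. fav u i X = c} = ?M" if "c \<in> X" for c
  proof -
    have "{i \<in> N. fav u i X = c} = {i \<in> N. g i = c}" using fav_X by auto
    then show ?thesis using fibre[rule_format, OF that, symmetric] k(1) by simp
  qed
  have "2 \<le> ?M" using div_le_mono[OF k(2), of "card X"] k(1) by simp
  have "stable_tie u N C X (\<lambda>i. fav u i X) ?M" unfolding stable_tie_def
  proof (intro conjI ballI impI)
    show "real (u i c) \<le> (\<Sum>d\<in>X. real (u i d)) / real (card X)" if "i \<in> N" "c \<in> X - {fav u i X}" for i c
    proof -
      have ne: "u i ` (X - {g i}) \<noteq> {}" using card_ge_2_Diff_nonempty[OF k(1), of "g i"] by blast
      have fin: "finite (u i ` (X - {g i}))" using finX by simp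
      have "\<forall>s\<in>u i ` (X - {g i}). real s \<le> (\<Sum>d\<in>X. real (u i d)) / real (card X)"
        using avg[rule_format, OF that(1)] real_Max_le_iff[OF fin ne] by simp
      then show ?thesis using that fav_X[OF that(1)] by simp
    qed
  qed (use XC k gX prefers fav_X M \<open>2 \<le> ?M\<close> in auto)
  then show ?thesis by blast
qed

lemma stable_tie_cond3:
  assumes tie: "stable_tie u N C W g M" and "M \<noteq> 1"
  shows "cond3 u N C W"
  unfolding cond3_def
proof (intro conjI exI[of _ g] ballI)
  show "W \<subseteq> C" "2 \<le> card W" using tie_W[OF tie] by simp_all
  show "2 * card W \<le> card N" using tie_card_N[OF tie] tie_M_pos[OF tie] \<open>M \<noteq> 1\<close> by simp
  show "card W \<le> card C" using card_mono[OF finite_C tie_W(1)[OF tie]] .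
  show "card {i \<in> N. g i = c} * card W = card N" if "c \<in> W" for c
    using tie_fibre[OF tie that] tie_card_N[OF tie] by simp
  show "real (Max (u i ` (W - {g i}))) \<le> real (\<Sum>c\<in>W. u i c) / real (card W)" if "i \<in> N" for i
  proof -
    have "u i ` (W - {g i}) \<noteq> {}" using card_ge_2_Diff_nonempty[OF tie_W(2)[OF tie], of "g i"] by blast
    moreover have "finite (u i ` (W - {g i}))" using tie_W(3)[OF tie] by simp
    ultimately show ?thesis using tie_average[OF tie that] by (simp add: real_Max_le_iff)
  qed
qed (use tie_vote[OF tie] tie_prefers[OF tie] in auto)

lemma cond2_PNE: "cond2 u N C \<Longrightarrow> is_PNE R u N C \<epsilon> (\<lambda>v. if v \<in> N then Some (fav u v C) else None)"
  using stable_tie_PNE[OF cond2_stable_tie] unfolding vote_profile_def .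

lemma cond3_PNE: "cond3 u N C X \<Longrightarrow> is_PNE R u N C \<epsilon> (\<lambda>v. if v \<in> N then Some (fav u v X) else None)"
proof -
  assume "cond3 u N C X"
  then obtain M where "stable_tie u N C X (\<lambda>i. fav u i X) M" using cond3_stable_tie by blast
  then show ?thesis using stable_tie_PNE unfolding vote_profile_def by blast
qed

section \<open>No other equilibria\<close>

lemma PNE_no_votes:
  assumes P: "is_PNE R u N C \<epsilon> (\<lambda>v. None)"
  shows "R = RV \<and> (\<exists>c. cond1 u N C c)"
proof -
  let ?a = "\<lambda>j. fav u j C"
  have W: "Wset N C (\<lambda>v. None) = C" by (rule Wset_no_votes[OF finite_C C_nonempty])
  have top: "real (u i (?a i)) \<le> expected_utility R u N C (\<lambda>v. None) i + \<epsilon>" if "i \<in> N" for i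
    using PNE_vote_for_winner_le[OF P that, of "?a i"] fav_in[OF order_refl C_nonempty that] W
    by (simp add: lazy_util_eq)
  obtain i where i: "i \<in> N" using N_nonempty by blast
  have "R \<noteq> RC"
  proof
    assume RC: "R = RC"
    obtain d where d: "d \<in> C" "d \<noteq> ?a i" using card_ge_2_Diff_nonempty[OF card_C, of "?a i"] by blast
    have "(\<Sum>e\<in>C. real (u i e)) / real (card C) + \<epsilon> < real (u i (?a i))"
    proof (rule mean_add_less[OF finite_C d(1) _ _ eps_less_C])
      show "real (u i e) \<le> real (u i (?a i))" if "e \<in> C" for e using fav_ge[OF order_refl i that] by simp
      show "real (u i d) + 1 \<le> real (u i (?a i))" using fav_greater[OF order_refl i d] by linarith
    qed
    then show False using top[OF i] RC W by (simp add: expected_utility_RC)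
  qed
  then have RV: "R = RV" by (cases R) auto
  have "?a j = ?a i" if j: "j \<in> N" for j
  proof (rule ccontr)
    assume ne: "?a j \<noteq> ?a i"
    have aC: "?a l \<in> C" if "l \<in> N" for l using fav_in[OF order_refl C_nonempty that] .
    have "(\<Sum>l\<in>N. real (u i (?a l))) / real (card N) + \<epsilon> < real (u i (?a i))"
    proof (rule mean_add_less[OF finite_N j _ _ eps_less_N])
      show "real (u i (?a l)) \<le> real (u i (?a i))" if "l \<in> N" for l
        using fav_ge[OF order_refl i aC[OF that]] by simp
      show "real (u i (?a j)) + 1 \<le> real (u i (?a i))"
        using fav_greater[OF order_refl i aC[OF j] ne] by linarith
    qed
    moreover have "vpick u N C (\<lambda>v. None) l = ?a l" for l unfolding vpick_def W by simp
    ultimately show False using top[OF i] RV by (simp add: expected_utility_RV)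
  qed
  then have "cond1 u N C (?a i)" unfolding cond1_def using fav_in[OF order_refl C_nonempty i] by auto
  with RV show ?thesis by blast
qed

lemma PNE_unique_winner_abstain:
  assumes P: "is_PNE R u N C \<epsilon> b" and W: "Wset N C b = {c}" and i: "i \<in> N" "b i \<noteq> None"
  shows "Wset N C (b(i := None)) \<noteq> {c}"
proof
  assume "Wset N C (b(i := None)) = {c}"
  then have "lazy_util R u N C \<epsilon> (b(i := None)) i = real (u i c) + \<epsilon>"
    by (simp add: lazy_util_eq expected_utility_unique_winner)
  moreover have "lazy_util R u N C \<epsilon> b i = real (u i c)"
    using i(2) W by (simp add: lazy_util_eq expected_utility_unique_winner del: not_None_eq)
  ultimately show False using PNE_abstain[OF P i(1)] eps_pos by simp
qed

lemma PNE_unique_winner_votes: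
  assumes P: "is_PNE R u N C \<epsilon> b" and W: "Wset N C b = {c}"
  shows "b v = None \<or> b v = Some c"
proof (rule ccontr)
  assume "\<not> (b v = None \<or> b v = Some c)"
  then obtain d where d: "b v = Some d" "d \<noteq> c" by auto
  then have v: "v \<in> N" using PNE_ballot[OF P] by blast
  have "Wset N C (b(v := None)) = {c}"
    using Wset_abstain_from_loser[of N C v b d, OF finite_N finite_C C_nonempty v d(1)] d(2) W by simp
  then show False using PNE_unique_winner_abstain[OF P W v] d(1) by simp
qed

lemma PNE_unique_winner_sole_voter:
  assumes P: "is_PNE R u N C \<epsilon> b" and W: "Wset N C b = {c}" and votes: "b \<noteq> (\<lambda>v. None)"
  shows "\<exists>i\<in>N. b = (\<lambda>v. if v = i then Some c else None)"
proof -
  note only_c = PNE_unique_winner_votes[OF P W]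
  obtain i where bi: "b i = Some c" using votes only_c by fastforce
  then have i: "i \<in> N" using PNE_ballot[OF P] by blast
  have "b j = None" if "j \<noteq> i" for j
  proof (rule ccontr)
    assume "b j \<noteq> None"
    then have bj: "b j = Some c" using only_c[of j] by (cases "b j") simp_all
    then have "j \<in> N" using PNE_ballot[OF P] by blast
    let ?b = "b(i := None)"
    have "Wset N C ?b = {c}"
    proof (rule Wset_eqI[OF finite_C, where M = "sc N ?b c"])
      show "{c} \<subseteq> C" using W Wset_subset[of N C b] by blast
      show "sc N ?b e < sc N ?b c" if "e \<in> C - {c}" for e
      proof -
        have "?b v \<noteq> Some e" for v using only_c[of v] that by auto
        then have "sc N ?b e = 0" unfolding sc_def by simp
        moreover have "0 < sc N ?b c"
          unfolding sc_pos_iff[OF finite_N] using bj \<open>j \<in> N\<close> \<open>j \<noteq> i\<close> by (intro bexI[of _ j]) simp_all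
        ultimately show ?thesis by simp
      qed
    qed simp_all
    then show False using PNE_unique_winner_abstain[OF P W i] bi by simp
  qed
  then have "b = (\<lambda>v. if v = i then Some c else None)" using bi by auto
  with i show ?thesis by blast
qed

lemma PNE_sole_voter_cond1:
  assumes P: "is_PNE R u N C \<epsilon> (\<lambda>v. if v = i then Some c else None)" and i: "i \<in> N"
  shows "cond1 u N C c"
proof -
  let ?b = "\<lambda>v. if v = i then Some c else None"
  have cC: "c \<in> C" using PNE_ballot[OF P, of i c] by simp
  have current: "lazy_util R u N C \<epsilon> ?b j = real (u j c) + (if j = i then 0 else \<epsilon>)" for j
    by (simp add: lazy_util_eq expected_utility_unique_winner Wset_sole_vote[OF finite_C i cC])
  have "fav u j C = c" if j: "j \<in> N" for j
  proof (rule ccontr)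
    let ?a = "fav u j C" and ?b' = "?b(j := Some (fav u j C))"
    assume ne: "?a \<noteq> c"
    have aC: "?a \<in> C" using fav_in[OF order_refl C_nonempty j] .
    have less: "u j c < u j ?a" using fav_greater[OF order_refl j cC] ne by simp
    have "real (u j c) + (if j = i then 0 else \<epsilon>) < expected_utility R u N C ?b' j"
    proof (cases "j = i")
      case True
      then have "?b' = (\<lambda>v. if v = i then Some ?a else None)" by auto
      then show ?thesis using True less
        by (simp add: expected_utility_unique_winner Wset_sole_vote[OF finite_C i aC])
    next
      case False
      have "sc N ?b' e = (if e = c then 1 else 0) + (if e = ?a then 1 else 0)" for e
        using sc_fun_upd[OF finite_N j, of ?b "Some ?a" e] sc_sole_vote[OF i, of c e] False by simp
      then have W': "Wset N C ?b' = {c, ?a}"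
        by (intro Wset_eqI[OF finite_C, where M = 1]) (use cC aC ne in auto)
      have "real (u j c) + \<epsilon> < expected_utility R u N C ?b' j"
        by (rule expected_utility_gain[OF j _ _ _ less]) (use W' less in auto)
      then show ?thesis using False by simp
    qed
    then show False using PNE_vote[OF P j aC] current[of j] by (simp add: lazy_util_eq)
  qed
  then show ?thesis using cC unfolding cond1_def by blast
qed

lemma PNE_sole_voter_RC:
  assumes P: "is_PNE R u N C \<epsilon> (\<lambda>v. if v = i then Some c else None)" and i: "i \<in> N"
    and c: "cond1 u N C c"
  shows "R = RC"
proof (rule ccontr)
  assume "R \<noteq> RC"
  then have RV: "R = RV" by (cases R) auto
  have cC: "c \<in> C" using c unfolding cond1_def by blast
  have "vpick u N C (\<lambda>v. None) l = c" if "l \<in> N" for l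
    using c that unfolding cond1_def vpick_def Wset_no_votes[OF finite_C C_nonempty] by simp
  then have "lazy_util R u N C \<epsilon> (\<lambda>v. None) i = real (u i c) + \<epsilon>"
    using RV finite_N N_nonempty by (simp add: lazy_util_eq expected_utility_RV)
  moreover have "(\<lambda>v. if v = i then Some c else None)(i := None) = (\<lambda>v. None)" by auto
  ultimately show False using PNE_abstain[OF P i] eps_pos
    by (simp add: lazy_util_eq expected_utility_unique_winner Wset_sole_vote[OF finite_C i cC])
qed

lemma PNE_tie_votes_for_winners:
  assumes P: "is_PNE R u N C \<epsilon> b" and votes: "b \<noteq> (\<lambda>v. None)"
    and tie: "card (Wset N C b) \<noteq> 1" and l: "l \<in> N"
  shows "\<exists>c\<in>Wset N C b. b l = Some c"
proof (cases "b l")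
  case None
  let ?f = "fav u l (Wset N C b)"
  have "?f \<in> Wset N C b" using fav_in[OF Wset_subset Wset_nonempty[OF finite_C C_nonempty] l] .
  then have "real (u l ?f) \<le> expected_utility R u N C b l + \<epsilon>"
    using PNE_vote_for_winner_le[OF P l] None by (simp add: lazy_util_eq)
  then show ?thesis using expected_utility_less_fav[where R = R, OF PNE_Max_pos[OF P votes] tie l] by simp
next
  case (Some d)
  show ?thesis
  proof (rule ccontr)
    assume "\<not> (\<exists>c\<in>Wset N C b. b l = Some c)"
    then have "d \<notin> Wset N C b" using Some by blast
    then have "lazy_util R u N C \<epsilon> (b(l := None)) l = lazy_util R u N C \<epsilon> b l + \<epsilon>"
      using expected_utility_abstain_from_loser[of l b d, OF l Some] Some by (simp add: lazy_util_eq)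
    then show False using PNE_abstain[OF P l] eps_pos by simp
  qed
qed

context
  fixes R :: rule and b :: "'v \<Rightarrow> 'c option"
  assumes P: "is_PNE R u N C \<epsilon> b" and votes: "b \<noteq> (\<lambda>v. None)"
    and tie: "card (Wset N C b) \<noteq> 1"
begin

lemma PNE_tie_lazy_util:
  assumes "i \<in> N"
  shows "lazy_util R u N C \<epsilon> b i = (\<Sum>c\<in>Wset N C b. real (u i c)) / real (card (Wset N C b))"
proof -
  have "b i \<noteq> None" using PNE_tie_votes_for_winners[OF P votes tie assms] by auto
  then show ?thesis
    using PNE_tie_votes_for_winners[OF P votes tie]
    by (simp add: lazy_util_eq expected_utility_vote_for_winners del: not_None_eq)
qed

lemma PNE_tie_fav:
  assumes i: "i \<in> N"
  shows "b i = Some (fav u i (Wset N C b))"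
proof -
  let ?W = "Wset N C b" and ?f = "fav u i (Wset N C b)"
  obtain g where g: "g \<in> ?W" "b i = Some g" using PNE_tie_votes_for_winners[OF P votes tie i] by blast
  have "g = ?f"
  proof (rule ccontr)
    assume ne: "g \<noteq> ?f"
    have fW: "?f \<in> ?W" using fav_in[OF Wset_subset _ i] g(1) by blast
    have "(\<Sum>c\<in>?W. real (u i c)) / real (card ?W) + 0 < real (u i ?f)"
    proof (rule mean_add_less[OF finite_subset[OF Wset_subset finite_C] g(1)])
      show "real (u i c) \<le> real (u i ?f)" if "c \<in> ?W" for c using fav_ge[OF Wset_subset i that] by simp
      show "real (u i g) + 1 \<le> real (u i ?f)" using fav_greater[OF Wset_subset i g(1) ne] by linarith
      show "0 < 1 / real (card ?W)" using card_Wset_ge_2[OF tie] by simp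
    qed
    then show False using PNE_vote_for_winner_le[OF P i fW] PNE_tie_lazy_util[OF i] g(2) ne by simp
  qed
  then show ?thesis using g(2) by simp
qed

lemma PNE_tie_top:
  assumes M: "Max (sc N b ` C) = 1" and i: "i \<in> N"
  shows "b i = Some (fav u i C)"
proof (rule ccontr)
  let ?W = "Wset N C b" and ?w = "fav u i (Wset N C b)" and ?a = "fav u i C"
  assume "b i \<noteq> Some ?a"
  then have ne: "?w \<noteq> ?a" using PNE_tie_fav[OF i] by simp
  have wW: "?w \<in> ?W" using fav_in[OF Wset_subset Wset_nonempty[OF finite_C C_nonempty] i] .
  have aC: "?a \<in> C" using fav_in[OF order_refl C_nonempty i] .
  have less: "u i ?w < u i ?a" using fav_greater[OF order_refl i _ ne] wW Wset_subset[of N C b] by blast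
  have "?a \<notin> ?W"
  proof
    assume "?a \<in> ?W"
    then have "u i ?a \<le> u i ?w" by (rule fav_ge[OF Wset_subset i])
    then show False using less by simp
  qed
  then have "expected_utility R u N C (b(i := Some ?a)) i
      = ((\<Sum>e\<in>?W. real (u i e)) - real (u i ?w) + real (u i ?a)) / real (card ?W)"
    using PNE_tie_votes_for_winners[OF P votes tie] aC PNE_tie_fav[OF i]
    by (intro expected_utility_switch_to_loser[OF _ M i]) auto
  also have "\<dots> > (\<Sum>e\<in>?W. real (u i e)) / real (card ?W)"
    using less card_Wset_ge_2[OF tie] by (simp add: divide_strict_right_mono)
  finally show False
    using PNE_vote[OF P i aC] PNE_tie_lazy_util[OF i] by (simp add: lazy_util_eq)
qed

lemma PNE_tie_stable:
  defines "g \<equiv> \<lambda>l. fav u l (Wset N C b)"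
  shows "stable_tie u N C (Wset N C b) g (Max (sc N b ` C)) \<and> b = vote_profile N g"
proof
  let ?W = "Wset N C b" and ?M = "Max (sc N b ` C)"
  have vote: "b i = Some (g i)" if "i \<in> N" for i using PNE_tie_fav[OF that] unfolding g_def .
  show "b = vote_profile N g"
  proof
    fix v show "b v = vote_profile N g v"
      using vote[of v] PNE_ballot[OF P, of v] by (cases "v \<in> N"; cases "b v") (auto simp: vote_profile_in vote_profile_notin)
  qed
  show "stable_tie u N C ?W g ?M" unfolding stable_tie_def
  proof (intro conjI ballI impI)
    show "?W \<subseteq> C" by (rule Wset_subset)
    show "2 \<le> card ?W" by (rule card_Wset_ge_2[OF tie])
    show "g i \<in> ?W" if "i \<in> N" for i
      using fav_in[OF Wset_subset Wset_nonempty[OF finite_C C_nonempty] that] unfolding g_def .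
    show "card {i \<in> N. g i = c} = ?M" if "c \<in> ?W" for c
    proof -
      have "{i \<in> N. g i = c} = {i \<in> N. b i = Some c}" using vote by auto
      then show ?thesis using sc_Wset[OF that] unfolding sc_def by simp
    qed
    show "u i c < u i (g i)" if "i \<in> N" "c \<in> ?W - {g i}" for i c
      using fav_greater[OF Wset_subset that(1)] that(2) unfolding g_def by blast
    show "real (u i c) \<le> (\<Sum>d\<in>?W. real (u i d)) / real (card ?W)" if "i \<in> N" "c \<in> ?W - {g i}" for i c
      using PNE_vote_for_winner_le[OF P that(1), of c] PNE_tie_lazy_util[OF that(1)] vote[OF that(1)] that(2)
      by auto
    show "u i c < u i (g i)" if "?M = 1" "i \<in> N" "c \<in> C - {g i}" for i c
      using PNE_tie_top[OF that(1,2)] vote[OF that(2)] fav_greater[OF order_refl that(2)] that(3) by auto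
  qed
qed

end

lemma PNE_tie_cases:
  assumes P: "is_PNE R u N C \<epsilon> b" and votes: "b \<noteq> (\<lambda>v. None)" and tie: "card (Wset N C b) \<noteq> 1"
  shows "(cond2 u N C \<and> b = (\<lambda>v. if v \<in> N then Some (fav u v C) else None))
       \<or> (\<exists>X. cond3 u N C X \<and> b = (\<lambda>v. if v \<in> N then Some (fav u v X) else None))"
proof -
  let ?W = "Wset N C b" and ?M = "Max (sc N b ` C)"
  have stable: "stable_tie u N C ?W (\<lambda>l. fav u l ?W) ?M"
    and b: "b = vote_profile N (\<lambda>l. fav u l ?W)"
    using PNE_tie_stable[OF P votes tie] by auto
  show ?thesis
  proof (cases "?M = 1")
    case True
    have "cond2 u N C" and fav_C: "\<forall>i\<in>N. fav u i C = fav u i ?W"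
      using stable_tie_cond2[OF stable[unfolded True]] by auto
    moreover have "b = vote_profile N (\<lambda>l. fav u l C)"
      by (rule trans[OF b vote_profile_cong]) (use fav_C in simp)
    ultimately show ?thesis unfolding vote_profile_def by blast
  next
    case False
    have "\<exists>X. cond3 u N C X \<and> b = (\<lambda>v. if v \<in> N then Some (fav u v X) else None)"
    proof (intro exI[of _ ?W] conjI)
      show "cond3 u N C ?W" using stable_tie_cond3[OF stable False] .
      show "b = (\<lambda>v. if v \<in> N then Some (fav u v ?W) else None)" using b unfolding vote_profile_def .
    qed
    then show ?thesis ..
  qed
qed

lemma PNE_classification:
  assumes P: "is_PNE R u N C \<epsilon> b"
  shows "(\<exists>c. cond1 u N C c \<and>
            ((R = RC \<and> (\<exists>i\<in>N. b = (\<lambda>v. if v = i then Some c else None))) \<or> (R = RV \<and> b = (\<lambda>v. None))))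
       \<or> (cond2 u N C \<and> b = (\<lambda>v. if v \<in> N then Some (fav u v C) else None))
       \<or> (\<exists>X. cond3 u N C X \<and> b = (\<lambda>v. if v \<in> N then Some (fav u v X) else None))"
proof (cases "b = (\<lambda>v. None)")
  case True
  then show ?thesis using PNE_no_votes[of R] P by auto
next
  case votes: False
  show ?thesis
  proof (cases "card (Wset N C b) = 1")
    case True
    then obtain c where "Wset N C b = {c}" by (rule card_1_singletonE)
    then obtain i where i: "i \<in> N" and b: "b = (\<lambda>v. if v = i then Some c else None)"
      using PNE_unique_winner_sole_voter[OF P _ votes] by blast
    have "cond1 u N C c" using PNE_sole_voter_cond1[OF P[unfolded b] i] .
    moreover have "R = RC" using PNE_sole_voter_RC[OF P[unfolded b] i] calculation .
    ultimately show ?thesis using i b by blast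
  next
    case False
    then show ?thesis using PNE_tie_cases[OF P votes] by blast
  qed
qed

end

theorem theorem2:
  fixes N :: "'v set" and C :: "'c set" and u :: "'v \<Rightarrow> 'c \<Rightarrow> nat"
    and R :: rule and \<epsilon> :: real
  assumes "finite N" and "finite C" and "card N \<ge> 2" and "card C \<ge> 2"
    and "\<forall>i\<in>N. inj_on (u i) C"
    and "0 < \<epsilon>" and "\<epsilon> < 1 / real (card C)" and "\<epsilon> < 1 / real (card N)"
  shows "((\<exists>b. is_PNE R u N C \<epsilon> b) \<longleftrightarrow>
            ((\<exists>c. cond1 u N C c) \<or> cond2 u N C \<or> (\<exists>X. cond3 u N C X)))
    \<and> (\<forall>c. cond1 u N C c \<longrightarrow>
          (R = RC \<longrightarrow> (\<forall>i\<in>N. is_PNE R u N C \<epsilon> (\<lambda>v. if v = i then Some c else None)))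
        \<and> (R = RV \<longrightarrow> is_PNE R u N C \<epsilon> (\<lambda>v. None)))
    \<and> (cond2 u N C \<longrightarrow> is_PNE R u N C \<epsilon> (\<lambda>v. if v \<in> N then Some (fav u v C) else None))
    \<and> (\<forall>X. cond3 u N C X \<longrightarrow> is_PNE R u N C \<epsilon> (\<lambda>v. if v \<in> N then Some (fav u v X) else None))
    \<and> (\<forall>b. is_PNE R u N C \<epsilon> b \<longrightarrow>
          ((\<exists>c. cond1 u N C c \<and>
               ((R = RC \<and> (\<exists>i\<in>N. b = (\<lambda>v. if v = i then Some c else None)))
              \<or> (R = RV \<and> b = (\<lambda>v. None)))))
        \<or> (cond2 u N C \<and> b = (\<lambda>v. if v \<in> N then Some (fav u v C) else None))
        \<or> (\<exists>X. cond3 u N C X \<and> b = (\<lambda>v. if v \<in> N then Some (fav u v X) else None)))"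
proof -
  interpret lazy_voting N C u \<epsilon> using assms by unfold_locales auto
  have cond1: "(R = RC \<longrightarrow> (\<forall>i\<in>N. is_PNE R u N C \<epsilon> (\<lambda>v. if v = i then Some c else None)))
      \<and> (R = RV \<longrightarrow> is_PNE R u N C \<epsilon> (\<lambda>v. None))" if "cond1 u N C c" for c
    using cond1_sole_voter_PNE[OF that] cond1_abstention_PNE[OF that] by simp
  have "\<exists>b. is_PNE R u N C \<epsilon> b" if "cond1 u N C c" for c
  proof (cases R)
    case RC
    obtain i where "i \<in> N" using N_nonempty by blast
    then show ?thesis using cond1[OF that] RC by blast
  qed (use cond1[OF that] in blast)
  then have exists: "\<exists>b. is_PNE R u N C \<epsilon> b"
    if "(\<exists>c. cond1 u N C c) \<or> cond2 u N C \<or> (\<exists>X. cond3 u N C X)"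
    using that cond2_PNE cond3_PNE by blast
  show ?thesis
  proof (intro conjI allI impI)
    show "(\<exists>b. is_PNE R u N C \<epsilon> b) \<longleftrightarrow> (\<exists>c. cond1 u N C c) \<or> cond2 u N C \<or> (\<exists>X. cond3 u N C X)"
      using exists PNE_classification by blast
  qed (use cond1 cond2_PNE cond3_PNE PNE_classification in blast)+
qed

end
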